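(* Let $X$ be a regular space. Then $X$ is set star compact if and only if $X$ is countably compact.
   Context: For a family $\mathcal U$ of subsets of $X$ and $A\subseteq X$, $st(A,\mathcal U)=\bigcup\{U\in\mathcal U: U\cap A\neq\emptyset\}$. A space $X$ is set star compact if for every nonempty $A\subseteq X$ and every family $\mathcal U$ of open subsets of $X$ with $\overline A\subseteq\bigcup\mathcal U$ there is a finite $\mathcal V\subseteq\mathcal U$ with $A\subseteq st(\bigcup\mathcal V,\mathcal U)$. No separation axioms are assumed beyond those stated. *)

theory Defs
  imports "HOL-Analysis.Analysis"
begin

definition star :: "'a set \<Rightarrow> 'a set set \<Rightarrow> 'a set" where
  "star A \<U> = \<Union>{U \<in> \<U>. U \<inter> A \<noteq> {}}"

definition set_star_compact :: "'a topology \<Rightarrow> bool" where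
  "set_star_compact X \<longleftrightarrow>
     (\<forall>A \<U>. A \<noteq> {} \<and> A \<subseteq> topspace X \<and> (\<forall>U\<in>\<U>. openin X U) \<and> X closure_of A \<subseteq> \<Union>\<U>
        \<longrightarrow> (\<exists>\<V>. \<V> \<subseteq> \<U> \<and> finite \<V> \<and> A \<subseteq> star (\<Union>\<V>) \<U>))"

definition countably_compact_space :: "'a topology \<Rightarrow> bool" where
  "countably_compact_space X \<longleftrightarrow>
     (\<forall>\<U>. countable \<U> \<and> (\<forall>U\<in>\<U>. openin X U) \<and> topspace X \<subseteq> \<Union>\<U>
        \<longrightarrow> (\<exists>\<V>. \<V> \<subseteq> \<U> \<and> finite \<V> \<and> topspace X \<subseteq> \<Union>\<V>))"

end

theory Submission
  imports Defs
begin

(*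
  Countably compact implies set star compact: if A and \<U> admit no finite \<V> with
  A \<subseteq> st(\<Union>\<V>, \<U>), choose x_n \<in> A outside the star of the members of \<U> picked
  around x_0, ..., x_(n-1). Then no member of \<U> contains two terms of the sequence, yet a
  cluster point of (x_n) lies in cl A \<subseteq> \<Union>\<U>.

  Conversely, if a regular X is not countably compact, there is an increasing open cover
  W_0 \<subseteq> W_1 \<subseteq> ... without finite subcover and points y_n \<in> W_(n+1) - W_n.
  Regularity yields pairwise disjoint open D_n \<ni> y_n, and cl {y_n} \<subseteq> D_n. Since only
  finitely many y_n lie outside any W_j, the closure of {y_n | n} is the union of the
  cl {y_n}, hence covered by the D_n; but a finite subfamily of the D_n stars only
  finitely many y_n.
*)

lemma countably_compact_space_Inter_decseq_closedin:
  fixes C :: "nat \<Rightarrow> 'a set"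
  assumes cc: "countably_compact_space X"
    and closed: "\<And>n. closedin X (C n)" and nonempty: "\<And>n. C n \<noteq> {}" and "decseq C"
  shows "(\<Inter>n. C n) \<noteq> {}"
proof
  assume empty: "(\<Inter>n. C n) = {}"
  let ?\<U> = "range (\<lambda>n. topspace X - C n)"
  have "topspace X \<subseteq> \<Union>?\<U>"
    using empty by auto
  moreover have "\<forall>U\<in>?\<U>. openin X U"
    using closed by auto
  ultimately obtain \<V> where "\<V> \<subseteq> ?\<U>" "finite \<V>" "topspace X \<subseteq> \<Union>\<V>"
    using cc unfolding countably_compact_space_def by (meson countable_image countableI_type)
  then obtain F where "finite F" and cover: "topspace X \<subseteq> (\<Union>n\<in>F. topspace X - C n)"
    by (metis finite_subset_image)
  then obtain k where "F \<subseteq> {..<k}"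
    using finite_nat_bounded by blast
  then have "C k \<subseteq> C n" if "n \<in> F" for n
    using \<open>decseq C\<close> that by (metis decseqD lessThan_iff less_imp_le subsetD)
  moreover have "C k \<subseteq> topspace X"
    using closed closedin_subset by blast
  ultimately show False
    using cover nonempty[of k] by blast
qed

lemma countably_compact_space_cluster_point:
  fixes x :: "nat \<Rightarrow> 'a"
  assumes "countably_compact_space X" "range x \<subseteq> topspace X"
  obtains q where "\<And>m. q \<in> X closure_of (x ` {m..})"
proof -
  have "(\<Inter>m. X closure_of (x ` {m..})) \<noteq> {}"
  proof (rule countably_compact_space_Inter_decseq_closedin[OF assms(1)])
    show "X closure_of (x ` {m..}) \<noteq> {}" for m
      using assms(2) by (simp add: closure_of_eq_empty_gen disjnt_def) blast
    show "decseq (\<lambda>m. X closure_of (x ` {m..}))"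
      by (rule decseq_SucI) (auto intro!: closure_of_mono)
  qed auto
  then show thesis
    using that by blast
qed

lemma star_avoiding_sequence:
  assumes cover: "A \<subseteq> \<Union>\<U>"
    and no_star_cover: "\<nexists>\<V>. \<V> \<subseteq> \<U> \<and> finite \<V> \<and> A \<subseteq> star (\<Union>\<V>) \<U>"
  obtains x :: "nat \<Rightarrow> 'a"
    where "range x \<subseteq> A" "\<And>U n m. U \<in> \<U> \<Longrightarrow> x n \<in> U \<Longrightarrow> x m \<in> U \<Longrightarrow> n = m"
proof -
  have "\<forall>\<V>. \<exists>a. \<V> \<subseteq> \<U> \<and> finite \<V> \<longrightarrow> a \<in> A - star (\<Union>\<V>) \<U>"
    using no_star_cover by blast
  then obtain p where p: "\<And>\<V>. \<V> \<subseteq> \<U> \<Longrightarrow> finite \<V> \<Longrightarrow> p \<V> \<in> A - star (\<Union>\<V>) \<U>"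
    by metis
  have "\<forall>a\<in>A. \<exists>U. U \<in> \<U> \<and> a \<in> U"
    using cover by blast
  then obtain u where u: "\<And>a. a \<in> A \<Longrightarrow> u a \<in> \<U> \<and> a \<in> u a"
    by metis
  \<comment> \<open>V n collects the members u x_0, ..., u x_(n-1) of \<U> chosen so far; x_n is p (V n).\<close>
  define V where "V = rec_nat {} (\<lambda>_ \<V>. insert (u (p \<V>)) \<V>)"
  have V_0: "V 0 = {}" and V_Suc: "\<And>n. V (Suc n) = insert (u (p (V n))) (V n)"
    by (simp_all add: V_def)
  have V: "V n \<subseteq> \<U> \<and> finite (V n)" for n
    by (induction n) (use p u in \<open>auto simp: V_0 V_Suc\<close>)
  define x where "x n = p (V n)" for n
  have x: "x n \<in> A - star (\<Union>(V n)) \<U>" for n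
    unfolding x_def using p V by blast
  have earlier_in_V: "u (x n) \<in> V m" if "n < m" for n m
    using that by (induction m) (auto simp: V_Suc x_def less_Suc_eq)
  have once: "\<not> (x n \<in> U \<and> x m \<in> U)" if "U \<in> \<U>" "n < m" for U n m
  proof
    assume "x n \<in> U \<and> x m \<in> U"
    moreover have "x n \<in> \<Union>(V m)"
      using earlier_in_V[OF \<open>n < m\<close>] u x by blast
    ultimately have "x m \<in> star (\<Union>(V m)) \<U>"
      using \<open>U \<in> \<U>\<close> unfolding star_def by blast
    then show False
      using x by blast
  qed
  then have "n = m" if "U \<in> \<U>" "x n \<in> U" "x m \<in> U" for U n m
    using that by (metis linorder_neqE_nat)
  moreover have "range x \<subseteq> A"
    using x by blast
  ultimately show thesis
    using that by blast
qed

lemma countably_compact_imp_set_star_compact: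
  assumes cc: "countably_compact_space X"
  shows "set_star_compact X"
  unfolding set_star_compact_def
proof (intro allI impI)
  fix A \<U>
  assume "A \<noteq> {} \<and> A \<subseteq> topspace X \<and> (\<forall>U\<in>\<U>. openin X U) \<and> X closure_of A \<subseteq> \<Union>\<U>"
  then have A: "A \<subseteq> topspace X" and opens: "\<forall>U\<in>\<U>. openin X U"
    and closure_cover: "X closure_of A \<subseteq> \<Union>\<U>"
    by auto
  have cover: "A \<subseteq> \<Union>\<U>"
    using A closure_cover closure_of_subset by blast
  show "\<exists>\<V>. \<V> \<subseteq> \<U> \<and> finite \<V> \<and> A \<subseteq> star (\<Union>\<V>) \<U>"
  proof (rule ccontr)
    assume no_star_cover: "\<nexists>\<V>. \<V> \<subseteq> \<U> \<and> finite \<V> \<and> A \<subseteq> star (\<Union>\<V>) \<U>"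
    then obtain x :: "nat \<Rightarrow> 'a" where x: "range x \<subseteq> A"
      and at_most_once: "\<And>U n m. U \<in> \<U> \<Longrightarrow> x n \<in> U \<Longrightarrow> x m \<in> U \<Longrightarrow> n = m"
      using star_avoiding_sequence[OF cover] by blast
    from x A have "range x \<subseteq> topspace X"
      by blast
    then obtain q where q: "\<And>m. q \<in> X closure_of (x ` {m..})"
      using countably_compact_space_cluster_point[OF cc] by blast
    have "q \<in> X closure_of A"
      using q[of 0] closure_of_mono[OF x, of X] by (auto simp: atLeast_0)
    then obtain U where U: "U \<in> \<U>" "q \<in> U"
      using closure_cover by blast
    then have "openin X U"
      using opens by blast
    then obtain n where "x n \<in> U"
      using q[of 0] U unfolding in_closure_of by blast
    obtain m where "m \<ge> Suc n" "x m \<in> U"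
      using q[of "Suc n"] U \<open>openin X U\<close> unfolding in_closure_of by blast
    then show False
      using at_most_once[OF \<open>U \<in> \<U>\<close> \<open>x n \<in> U\<close>] by fastforce
  qed
qed

lemma regular_space_open_closure_of_subset:
  assumes "regular_space X" "openin X W" "y \<in> W"
  obtains G where "openin X G" "y \<in> G" "X closure_of G \<subseteq> W"
proof -
  have "closedin X (topspace X - W)" "y \<in> topspace X - (topspace X - W)"
    using assms(2,3) openin_subset by auto
  then obtain G where "openin X G" "y \<in> G" "disjnt (topspace X - W) (X closure_of G)"
    using assms(1) unfolding regular_space by meson
  moreover have "X closure_of G \<subseteq> topspace X"
    by (rule closure_of_subset_topspace)
  ultimately show thesis
    using that unfolding disjnt_def by blast
qed

lemma regular_space_closure_of_singleton_subset:
  assumes "regular_space X" "openin X W" "y \<in> W"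
  shows "X closure_of {y} \<subseteq> W"
proof -
  obtain G where "openin X G" "y \<in> G" "X closure_of G \<subseteq> W"
    using regular_space_open_closure_of_subset[OF assms] .
  then show ?thesis
    using closure_of_mono[of "{y}" G X] by blast
qed

lemma not_countably_compact_space_open_chain:
  assumes "\<not> countably_compact_space X"
  obtains W :: "nat \<Rightarrow> 'a set"
    where "\<And>n. openin X (W n)" "incseq W" "topspace X \<subseteq> (\<Union>n. W n)" "\<And>n. \<not> topspace X \<subseteq> W n"
proof -
  obtain \<U> where "countable \<U>" and opens: "\<forall>U\<in>\<U>. openin X U" and cover: "topspace X \<subseteq> \<Union>\<U>"
    and no_finite_subcover: "\<nexists>\<V>. \<V> \<subseteq> \<U> \<and> finite \<V> \<and> topspace X \<subseteq> \<Union>\<V>"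
    using assms unfolding countably_compact_space_def by meson
  have "\<U> \<noteq> {}"
    using cover no_finite_subcover by auto
  define W where "W n = \<Union>(from_nat_into \<U> ` {..n})" for n
  have range_\<U>: "range (from_nat_into \<U>) = \<U>"
    by (simp add: \<open>countable \<U>\<close> \<open>\<U> \<noteq> {}\<close>)
  show thesis
  proof
    show "openin X (W n)" for n
      unfolding W_def using opens range_\<U> by (intro openin_Union) auto
    show "incseq W"
      unfolding W_def by (intro monoI Union_mono image_mono) auto
    have "\<Union>\<U> \<subseteq> (\<Union>n. W n)"
      unfolding W_def by (subst range_\<U>[symmetric]) auto
    then show "topspace X \<subseteq> (\<Union>n. W n)"
      using cover by (rule order_trans[rotated])
    show "\<not> topspace X \<subseteq> W n" for n
    proof
      assume "topspace X \<subseteq> W n"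
      then have "\<exists>\<V>. \<V> \<subseteq> \<U> \<and> finite \<V> \<and> topspace X \<subseteq> \<Union>\<V>"
        unfolding W_def using range_\<U> by (intro exI[of _ "from_nat_into \<U> ` {..n}"]) auto
      then show False
        using no_finite_subcover by (rule notE[rotated])
    qed
  qed
qed

lemma incseq_cover_strict_subsequence:
  fixes W :: "nat \<Rightarrow> 'a set"
  assumes "incseq W" "S \<subseteq> (\<Union>n. W n)" "\<And>n. \<not> S \<subseteq> W n"
  obtains k y where "strict_mono k" "\<And>n. y n \<in> S" "\<And>n. y n \<in> W (k (Suc n)) - W (k n)"
proof -
  have "\<forall>n. \<exists>z. z \<in> S - W n"
    using assms(3) by blast
  then obtain z where z: "\<And>n. z n \<in> S - W n"
    by metis
  have "\<forall>n. \<exists>j. z n \<in> W j"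
    using z assms(2) by blast
  then obtain later where later: "\<And>n. z n \<in> W (later n)"
    by metis
  have later_gt: "n < later n" for n
  proof (rule ccontr)
    assume "\<not> n < later n"
    then have "W (later n) \<subseteq> W n"
      using assms(1) by (simp add: monoD)
    then show False
      using z later by blast
  qed
  define k where "k = rec_nat 0 (\<lambda>_. later)"
  have k_Suc: "k (Suc n) = later (k n)" for n
    by (simp add: k_def)
  show thesis
  proof
    show "strict_mono k"
      unfolding strict_mono_Suc_iff using k_Suc later_gt by simp
    show "z (k n) \<in> S" for n
      using z by blast
    show "z (k n) \<in> W (k (Suc n)) - W (k n)" for n
      using z later k_Suc by simp
  qed
qed

lemma not_countably_compact_space_open_chain_points:
  assumes "\<not> countably_compact_space X"
  obtains W :: "nat \<Rightarrow> 'a set" and y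
    where "\<And>n. openin X (W n)" "incseq W" "topspace X \<subseteq> (\<Union>n. W n)"
      "\<And>n. y n \<in> topspace X" "\<And>n. y n \<in> W (Suc n) - W n"
proof -
  obtain V :: "nat \<Rightarrow> 'a set" where V: "\<And>n. openin X (V n)" "incseq V"
    and cover: "topspace X \<subseteq> (\<Union>n. V n)" and not_cover: "\<And>n. \<not> topspace X \<subseteq> V n"
    using not_countably_compact_space_open_chain[OF assms] by blast
  obtain k y where k: "strict_mono k"
    and y: "\<And>n. y n \<in> topspace X" "\<And>n. y n \<in> V (k (Suc n)) - V (k n)"
    using incseq_cover_strict_subsequence[OF V(2) cover not_cover] by blast
  show thesis
  proof
    show "openin X ((V \<circ> k) n)" for n
      using V(1) by simp
    show "incseq (V \<circ> k)"
      using V(2) k by (simp add: incseq_def strict_mono_less_eq)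
    have "V n \<subseteq> V (k n)" for n
      using V(2) k by (simp add: incseq_def strict_mono_imp_increasing)
    then have "(\<Union>n. V n) \<subseteq> (\<Union>n. (V \<circ> k) n)"
      by auto
    then show "topspace X \<subseteq> (\<Union>n. (V \<circ> k) n)"
      using cover by (rule order_trans[rotated])
  qed (use y in auto)
qed

lemma regular_space_disjoint_open_sequence:
  assumes "regular_space X" "\<And>n. openin X (W n)" "incseq W" "\<And>n. y n \<in> W (Suc n) - W n"
  obtains D where "\<And>n. openin X (D n)" "disjoint_family D" "\<And>n. y n \<in> D n"
proof -
  have "\<exists>G. openin X G \<and> y n \<in> G \<and> X closure_of G \<subseteq> W (Suc n)" for n
  proof -
    have "y n \<in> W (Suc n)"
      using assms(4) by blast
    then obtain G where "openin X G" "y n \<in> G" "X closure_of G \<subseteq> W (Suc n)"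
      by (rule regular_space_open_closure_of_subset[OF assms(1,2)])
    then show ?thesis
      by blast
  qed
  then obtain G where G: "\<And>n. openin X (G n)" "\<And>n. y n \<in> G n"
    and closure_G: "\<And>n. X closure_of (G n) \<subseteq> W (Suc n)"
    by metis
  define D where "D n = G n - X closure_of (\<Union>(G ` {..<n}))" for n
  have closure_earlier: "X closure_of (\<Union>(G ` {..<n})) \<subseteq> W n" for n
  proof -
    have "X closure_of (G i) \<subseteq> W n" if "i < n" for i
      using closure_G[of i] monoD[OF assms(3), of "Suc i" n] that by simp
    then show ?thesis
      by (simp add: closure_of_Union UN_subset_iff)
  qed
  show thesis
  proof
    show "openin X (D n)" for n
      unfolding D_def using G(1) by (simp add: openin_diff)
    show "y n \<in> D n" for n
      unfolding D_def using G(2) closure_earlier assms(4) by blast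
    have "D i \<inter> D j = {}" if "i < j" for i j
    proof -
      have "G i \<subseteq> X closure_of (\<Union>(G ` {..<j}))"
        using that G(1) openin_subset by (intro order_trans[OF _ closure_of_subset]) auto
      then show ?thesis
        unfolding D_def by blast
    qed
    then show "disjoint_family D"
      unfolding disjoint_family_on_def by (metis Int_commute linorder_neqE_nat)
  qed
qed

lemma closure_of_range_subset_UN_closure_of_singleton:
  fixes W :: "nat \<Rightarrow> 'a set"
  assumes "\<And>n. openin X (W n)" "incseq W" "topspace X \<subseteq> (\<Union>n. W n)" "\<And>n. y n \<notin> W n"
    and "range y \<subseteq> topspace X"
  shows "X closure_of (range y) \<subseteq> (\<Union>n. X closure_of {y n})"
proof
  fix t
  assume t: "t \<in> X closure_of (range y)"
  then have "t \<in> topspace X"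
    by (simp add: in_closure_of)
  then obtain j where "t \<in> W j"
    using assms(3) by blast
  have "y i \<notin> W j" if "j \<le> i" for i
    using assms(4)[of i] monoD[OF assms(2) that] by blast
  then have "X closure_of (y ` {j..}) \<subseteq> topspace X - W j"
    using assms(1,5) by (intro closure_of_minimal) (auto simp: closedin_diff)
  moreover have "range y = y ` ({..<j} \<union> {j..})"
    by (metis UNIV_eq_I Un_iff atLeast_iff lessThan_iff not_le)
  ultimately have "t \<in> X closure_of (y ` {..<j})"
    using t \<open>t \<in> W j\<close> by (auto simp: image_Un)
  also have "y ` {..<j} = (\<Union>i<j. {y i})"
    by blast
  also have "X closure_of (\<Union>i<j. {y i}) = (\<Union>i<j. X closure_of {y i})"
    by (simp add: closure_of_Union image_image)
  finally show "t \<in> (\<Union>n. X closure_of {y n})"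
    by blast
qed

lemma set_star_compactD:
  assumes "set_star_compact X" "A \<subseteq> topspace X" "\<forall>U\<in>\<U>. openin X U"
    and "X closure_of A \<subseteq> \<Union>\<U>" "A \<noteq> {}"
  shows "\<exists>\<V>. \<V> \<subseteq> \<U> \<and> finite \<V> \<and> A \<subseteq> star (\<Union>\<V>) \<U>"
  using assms unfolding set_star_compact_def by blast

lemma disjoint_open_sequence_not_set_star_compact:
  fixes D :: "nat \<Rightarrow> 'a set"
  assumes "\<And>n. openin X (D n)" "disjoint_family D" "\<And>n. y n \<in> D n"
    and "X closure_of (range y) \<subseteq> (\<Union>n. D n)"
  shows "\<not> set_star_compact X"
proof
  assume ssc: "set_star_compact X"
  have "range y \<subseteq> topspace X"
    using assms(1,3) openin_subset by blast
  moreover have "\<forall>U\<in>range D. openin X U"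
    using assms(1) by blast
  ultimately have "\<exists>\<V>. \<V> \<subseteq> range D \<and> finite \<V> \<and> range y \<subseteq> star (\<Union>\<V>) (range D)"
    using ssc assms(4) by (intro set_star_compactD) auto
  then obtain \<V> where \<V>: "\<V> \<subseteq> range D" "finite \<V>" "range y \<subseteq> star (\<Union>\<V>) (range D)"
    by blast
  obtain F where "finite F" "\<V> = D ` F"
    using finite_subset_image[OF \<V>(2,1)] by blast
  then have star_cover: "range y \<subseteq> star (\<Union>(D ` F)) (range D)"
    using \<V>(3) by simp
  obtain N where "F \<subseteq> {..<N}"
    using finite_nat_bounded[OF \<open>finite F\<close>] by blast
  have "y N \<in> star (\<Union>(D ` F)) (range D)"
    using star_cover by blast
  then obtain m i where "y N \<in> D m" "i \<in> F" "D m \<inter> D i \<noteq> {}"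
    unfolding star_def by blast
  moreover have "m = N"
    using \<open>y N \<in> D m\<close> assms(3)[of N] disjoint_family_onD[OF assms(2), of m N] by blast
  moreover have "i \<noteq> N"
    using \<open>i \<in> F\<close> \<open>F \<subseteq> {..<N}\<close> by blast
  ultimately show False
    using disjoint_family_onD[OF assms(2), of N i] by blast
qed

lemma regular_set_star_compact_imp_countably_compact:
  assumes reg: "regular_space X" and ssc: "set_star_compact X"
  shows "countably_compact_space X"
proof (rule ccontr)
  assume "\<not> countably_compact_space X"
  then obtain W :: "nat \<Rightarrow> 'a set" and y where W: "\<And>n. openin X (W n)" "incseq W"
    and cover: "topspace X \<subseteq> (\<Union>n. W n)" and y: "\<And>n. y n \<in> topspace X" "\<And>n. y n \<in> W (Suc n) - W n"
    using not_countably_compact_space_open_chain_points by blast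
  obtain D where D: "\<And>n. openin X (D n)" "disjoint_family D" "\<And>n. y n \<in> D n"
    using regular_space_disjoint_open_sequence[OF reg W y(2)] by blast
  have "X closure_of (range y) \<subseteq> (\<Union>n. X closure_of {y n})"
    using W cover y by (intro closure_of_range_subset_UN_closure_of_singleton) auto
  also have "\<dots> \<subseteq> (\<Union>n. D n)"
    using regular_space_closure_of_singleton_subset[OF reg D(1) D(3)] by blast
  finally have "\<not> set_star_compact X"
    by (rule disjoint_open_sequence_not_set_star_compact[OF D])
  then show False
    using ssc by contradiction
qed

theorem proposition1p2:
  fixes X :: "'a topology"
  assumes "regular_space X"
  shows "set_star_compact X \<longleftrightarrow> countably_compact_space X"
  using assms countably_compact_imp_set_star_compact regular_set_star_compact_imp_countably_compact
  by blast

end
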